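(* Let $(Y,\overline X,x)$ be a point for (BM$_{\mathbf n}$). Suppose either (i) it is 1-critical with a multiplier $\lambda$ (as in the definition of 1-criticality) satisfying $S_j(\lambda)\in\mathbb{S}^{n_j}_+$ for all $j\in[k]$, or (ii) it is 2-critical and $Y_j$ is column rank deficient (i.e. $\operatorname{rank}Y_j<p_j$) for every $j\in[k]$. Then $(Y,\overline X,x)$ is a global minimizer of (BM$_{\mathbf n}$).
   Context: Let $\mathbb{S}^{r}$ denote real symmetric $r\times r$ matrices, $\mathbb{S}^r_+$ the PSD cone, $A\bullet B=\operatorname{trace}(A^TB)$. Let $\mathbf n=(n_1,\dots,n_\ell)$, $d\ge 0$, $1\le k\le \ell$, $\mathbb{S}^{\mathbf n}=\mathbb{S}^{n_1}\times\cdots\times\mathbb{S}^{n_\ell}$, $\mathbb{S}^{\mathbf n}_+=\mathbb{S}^{n_1}_+\times\cdots\times\mathbb{S}^{n_\ell}_+$, with the inner product $\langle\cdot,\cdot\rangle$ on $\mathbb{S}^{\mathbf n}\times\mathbb{R}^d$ being the sum of trace inner products and the dot product. Let $C\in\mathbb{S}^{\mathbf n}\times\mathbb{R}^d$, $b\in\mathbb{R}^m$, and $\mathcal{A}:\mathbb{S}^{\mathbf n}\times\mathbb{R}^d\to\mathbb{R}^m$ linear, written $\mathcal{A}(X_1,\dots,X_\ell,x)=\sum_j\mathcal{A}_j(X_j)+\mathcal{A}_0(x)$ with $\mathcal{A}_j(X_j)=(A_{i,j}\bullet X_j)_{i\in[m]}$, $A_{i,j}\in\mathbb{S}^{n_j}$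 (this formula also defines $\mathcal{A}_j$ on nonsymmetric matrices); $\mathcal{A}^*$ is its adjoint. Let $\mathscr{X}=\{X=(X_1,\dots,X_\ell,x)\in\mathbb{S}^{\mathbf n}_+\times\mathbb{R}^d:\mathcal{A}(X)=b\}$, assumed nonempty, with $\min_{X\in\mathscr{X}}\langle C,X\rangle$ attained. For positive integers $p_1,\dots,p_k$, let $Y=(Y_1,\dots,Y_k)$, $Y_j\in\mathbb{R}^{n_j\times p_j}$, $q(Y)=(Y_1Y_1^T,\dots,Y_kY_k^T)$, $\overline X=(X_{k+1},\dots,X_\ell)$. Problem (BM$_{\mathbf n}$) is $\min_{Y,\overline X,x}\langle C,(q(Y),\overline X,x)\rangle$ subject to $(q(Y),\overline X,x)\in\mathscr{X}$. For $\lambda\in\mathbb{R}^m$ let $S(\lambda)=C-\mathcal{A}^*(\lambda)$ with components $S_j(\lambda)\in\mathbb{S}^{n_j}$ and $s(\lambda)\in\mathbb{R}^d$. A point $(Y,\overline X,x)$ is 1-critical with multiplier $\lambda\in\mathbb{R}^m$ if $(q(Y),\overline X,x)\in\mathscr{X}$, $S_j(\lambda)\in\mathbb{S}^{n_j}_+$ for $j>k$, $\sum_{j>k}S_j(\lambda)\bullet X_j=0$, $s(\lambda)=0$, and $S_j(\lambda)Y_j=0$ for $j\in[k]$; it is 2-critical if moreover, for each $j\in[k]$, $S_j(\lambda)\bullet U_jU_j^T\ge0$ for all $U_j\in\mathbb{R}^{n_j\times p_j}$ with $\mathcal{A}_j(U_jY_j^T)=0$. *)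

theory Defs
  imports "Jordan_Normal_Form.DL_Rank"
begin

text \<open>Blocks are indexed by j in {0..<l} (paper: 1..l); the first k blocks (j < k) are
the factorized ones.
Problem data: sizes n :: nat => nat, matrices A i j (n j x n j, symmetric),
vectors a0 i of dimension d with A_0(x)_i = a0 i . x, cost blocks Cm j and c, rhs b.\<close>

definition mat_trace :: "real mat \<Rightarrow> real" where
  "mat_trace M = (\<Sum>i<dim_row M. M $$ (i, i))"

definition frob :: "real mat \<Rightarrow> real mat \<Rightarrow> real" (infixl "\<bullet>\<^sub>F" 70) where
  "frob M N = mat_trace (transpose_mat M * N)"

definition sym_mat :: "nat \<Rightarrow> real mat \<Rightarrow> bool" where
  "sym_mat r M \<longleftrightarrow> M \<in> carrier_mat r r \<and> transpose_mat M = M"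

definition psd_mat :: "nat \<Rightarrow> real mat \<Rightarrow> bool" where
  "psd_mat r M \<longleftrightarrow> sym_mat r M \<and> (\<forall>v \<in> carrier_vec r. v \<bullet> (M *\<^sub>v v) \<ge> 0)"

definition sdp_data ::
  "nat \<Rightarrow> (nat \<Rightarrow> nat) \<Rightarrow> nat \<Rightarrow> nat \<Rightarrow> (nat \<Rightarrow> nat \<Rightarrow> real mat) \<Rightarrow> (nat \<Rightarrow> real vec)
   \<Rightarrow> (nat \<Rightarrow> real mat) \<Rightarrow> real vec \<Rightarrow> real vec \<Rightarrow> bool" where
  "sdp_data l n d m A a0 Cm c b \<longleftrightarrow>
     (\<forall>i<m. \<forall>j<l. sym_mat (n j) (A i j)) \<and> (\<forall>i<m. a0 i \<in> carrier_vec d) \<and>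
     (\<forall>j<l. sym_mat (n j) (Cm j)) \<and> c \<in> carrier_vec d \<and> b \<in> carrier_vec m"

definition opA ::
  "nat \<Rightarrow> (nat \<Rightarrow> nat \<Rightarrow> real mat) \<Rightarrow> (nat \<Rightarrow> real vec) \<Rightarrow> (nat \<Rightarrow> real mat) \<Rightarrow> real vec \<Rightarrow> nat \<Rightarrow> real" where
  "opA l A a0 X x i = (\<Sum>j<l. A i j \<bullet>\<^sub>F X j) + a0 i \<bullet> x"

definition feasible ::
  "nat \<Rightarrow> (nat \<Rightarrow> nat) \<Rightarrow> nat \<Rightarrow> nat \<Rightarrow> (nat \<Rightarrow> nat \<Rightarrow> real mat) \<Rightarrow> (nat \<Rightarrow> real vec)
   \<Rightarrow> real vec \<Rightarrow> (nat \<Rightarrow> real mat) \<Rightarrow> real vec \<Rightarrow> bool" where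
  "feasible l n d m A a0 b X x \<longleftrightarrow>
     (\<forall>j<l. psd_mat (n j) (X j)) \<and> x \<in> carrier_vec d \<and>
     (\<forall>i<m. opA l A a0 X x i = b $ i)"

definition objective ::
  "nat \<Rightarrow> (nat \<Rightarrow> real mat) \<Rightarrow> real vec \<Rightarrow> (nat \<Rightarrow> real mat) \<Rightarrow> real vec \<Rightarrow> real" where
  "objective l Cm c X x = (\<Sum>j<l. Cm j \<bullet>\<^sub>F X j) + c \<bullet> x"

definition liftBM :: "nat \<Rightarrow> (nat \<Rightarrow> real mat) \<Rightarrow> (nat \<Rightarrow> real mat) \<Rightarrow> nat \<Rightarrow> real mat" where
  "liftBM k Y Xb j = (if j < k then Y j * transpose_mat (Y j) else Xb j)"

definition feasibleBM ::
  "nat \<Rightarrow> (nat \<Rightarrow> nat) \<Rightarrow> nat \<Rightarrow> nat \<Rightarrow> nat \<Rightarrow> (nat \<Rightarrow> nat) \<Rightarrow> (nat \<Rightarrow> nat \<Rightarrow> real mat)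
   \<Rightarrow> (nat \<Rightarrow> real vec) \<Rightarrow> real vec
   \<Rightarrow> (nat \<Rightarrow> real mat) \<Rightarrow> (nat \<Rightarrow> real mat) \<Rightarrow> real vec \<Rightarrow> bool" where
  "feasibleBM l n d m k p A a0 b Y Xb x \<longleftrightarrow>
     (\<forall>j<k. Y j \<in> carrier_mat (n j) (p j)) \<and>
     feasible l n d m A a0 b (liftBM k Y Xb) x"

definition global_min_BM ::
  "nat \<Rightarrow> (nat \<Rightarrow> nat) \<Rightarrow> nat \<Rightarrow> nat \<Rightarrow> nat \<Rightarrow> (nat \<Rightarrow> nat) \<Rightarrow> (nat \<Rightarrow> nat \<Rightarrow> real mat)
   \<Rightarrow> (nat \<Rightarrow> real vec) \<Rightarrow> (nat \<Rightarrow> real mat) \<Rightarrow> real vec \<Rightarrow> real vec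
   \<Rightarrow> (nat \<Rightarrow> real mat) \<Rightarrow> (nat \<Rightarrow> real mat) \<Rightarrow> real vec \<Rightarrow> bool" where
  "global_min_BM l n d m k p A a0 Cm c b Y Xb x \<longleftrightarrow>
     feasibleBM l n d m k p A a0 b Y Xb x \<and>
     (\<forall>Y' Xb' x'. feasibleBM l n d m k p A a0 b Y' Xb' x' \<longrightarrow>
        objective l Cm c (liftBM k Y Xb) x \<le> objective l Cm c (liftBM k Y' Xb') x')"

definition slackS :: "(nat \<Rightarrow> nat) \<Rightarrow> nat \<Rightarrow> (nat \<Rightarrow> nat \<Rightarrow> real mat) \<Rightarrow> (nat \<Rightarrow> real mat) \<Rightarrow> real vec \<Rightarrow> nat \<Rightarrow> real mat" where
  "slackS n m A Cm lam j = mat (n j) (n j) (\<lambda>(r, s). Cm j $$ (r, s) - (\<Sum>i<m. lam $ i * A i j $$ (r, s)))"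

definition slack_s :: "nat \<Rightarrow> nat \<Rightarrow> (nat \<Rightarrow> real vec) \<Rightarrow> real vec \<Rightarrow> real vec \<Rightarrow> real vec" where
  "slack_s d m a0 c lam = vec d (\<lambda>r. c $ r - (\<Sum>i<m. lam $ i * a0 i $ r))"

definition crit1 ::
  "nat \<Rightarrow> (nat \<Rightarrow> nat) \<Rightarrow> nat \<Rightarrow> nat \<Rightarrow> nat \<Rightarrow> (nat \<Rightarrow> nat) \<Rightarrow> (nat \<Rightarrow> nat \<Rightarrow> real mat)
   \<Rightarrow> (nat \<Rightarrow> real vec) \<Rightarrow> (nat \<Rightarrow> real mat) \<Rightarrow> real vec \<Rightarrow> real vec
   \<Rightarrow> (nat \<Rightarrow> real mat) \<Rightarrow> (nat \<Rightarrow> real mat) \<Rightarrow> real vec \<Rightarrow> real vec \<Rightarrow> bool" where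
  "crit1 l n d m k p A a0 Cm c b Y Xb x lam \<longleftrightarrow>
     lam \<in> carrier_vec m \<and>
     feasibleBM l n d m k p A a0 b Y Xb x \<and>
     (\<forall>j\<in>{k..<l}. psd_mat (n j) (slackS n m A Cm lam j)) \<and>
     (\<Sum>j\<in>{k..<l}. slackS n m A Cm lam j \<bullet>\<^sub>F Xb j) = 0 \<and>
     slack_s d m a0 c lam = 0\<^sub>v d \<and>
     (\<forall>j<k. slackS n m A Cm lam j * Y j = 0\<^sub>m (n j) (p j))"

definition crit2 ::
  "nat \<Rightarrow> (nat \<Rightarrow> nat) \<Rightarrow> nat \<Rightarrow> nat \<Rightarrow> nat \<Rightarrow> (nat \<Rightarrow> nat) \<Rightarrow> (nat \<Rightarrow> nat \<Rightarrow> real mat)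
   \<Rightarrow> (nat \<Rightarrow> real vec) \<Rightarrow> (nat \<Rightarrow> real mat) \<Rightarrow> real vec \<Rightarrow> real vec
   \<Rightarrow> (nat \<Rightarrow> real mat) \<Rightarrow> (nat \<Rightarrow> real mat) \<Rightarrow> real vec \<Rightarrow> real vec \<Rightarrow> bool" where
  "crit2 l n d m k p A a0 Cm c b Y Xb x lam \<longleftrightarrow>
     crit1 l n d m k p A a0 Cm c b Y Xb x lam \<and>
     (\<forall>j<k. \<forall>U \<in> carrier_mat (n j) (p j).
        (\<forall>i<m. A i j \<bullet>\<^sub>F (U * transpose_mat (Y j)) = 0) \<longrightarrow>
        slackS n m A Cm lam j \<bullet>\<^sub>F (U * transpose_mat U) \<ge> 0)"

end

theory Submission
  imports Defs
begin

(* For every multiplier lam with s(lam) = 0, the objective at any feasible point (X, x) equals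
   lam . b + sum_j S_j(lam) . X_j.  At the critical point the sum vanishes (S_j Y_j = 0 on the
   factorized blocks, complementary slackness on the others), while at every feasible point it is
   nonnegative once all S_j(lam) are PSD, because the Frobenius product of two PSD matrices is
   nonnegative.  In case (ii) the factorized blocks S_j(lam) are PSD as well: choose z <> 0 with
   Y_j z = 0; for every v the matrix U = v z^T satisfies U Y_j^T = 0, so second-order criticality
   gives |z|^2 v^T S_j v = S_j . U U^T >= 0. *)

(* Square matrices as functions on {..<n} x {..<n}: the elimination argument below then needs no
   carrier bookkeeping. *)
definition bilinear_form :: "nat \<Rightarrow> (nat \<Rightarrow> nat \<Rightarrow> real) \<Rightarrow> (nat \<Rightarrow> real) \<Rightarrow> (nat \<Rightarrow> real) \<Rightarrow> real"
  where "bilinear_form n M u v = (\<Sum>r<n. \<Sum>s<n. u r * M r s * v s)"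

definition psd_fun :: "nat \<Rightarrow> (nat \<Rightarrow> nat \<Rightarrow> real) \<Rightarrow> bool" where
  "psd_fun n M \<longleftrightarrow> (\<forall>r<n. \<forall>s<n. M r s = M s r) \<and> (\<forall>w. 0 \<le> bilinear_form n M w w)"

lemma bilinear_form_commute:
  assumes "\<forall>r<n. \<forall>s<n. M r s = M s r"
  shows "bilinear_form n M v u = bilinear_form n M u v"
  unfolding bilinear_form_def
  by (subst sum.swap) (use assms in \<open>auto intro!: sum.cong simp: mult_ac\<close>)

lemma bilinear_form_add_smult:
  assumes "\<forall>r<n. \<forall>s<n. M r s = M s r"
  shows "bilinear_form n M (\<lambda>i. t * u i + v i) (\<lambda>i. t * u i + v i)
    = t\<^sup>2 * bilinear_form n M u u + 2 * t * bilinear_form n M u v + bilinear_form n M v v"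
proof -
  have "\<And>r s. (t * u r + v r) * M r s * (t * u s + v s) =
      t\<^sup>2 * (u r * M r s * u s) + t * (u r * M r s * v s) + t * (v r * M r s * u s) + v r * M r s * v s"
    by (simp add: algebra_simps power2_eq_square)
  then have "bilinear_form n M (\<lambda>i. t * u i + v i) (\<lambda>i. t * u i + v i)
      = t\<^sup>2 * bilinear_form n M u u + t * bilinear_form n M u v + t * bilinear_form n M v u
        + bilinear_form n M v v"
    unfolding bilinear_form_def by (simp add: sum.distrib sum_distrib_left)
  then show ?thesis
    using bilinear_form_commute[OF assms] by simp
qed

lemma bilinear_form_unit_left:
  assumes "a < n"
  shows "bilinear_form n M (\<lambda>i. of_bool (i = a)) v = (\<Sum>s<n. M a s * v s)"
proof -
  have "bilinear_form n M (\<lambda>i. of_bool (i = a)) v = (\<Sum>r<n. of_bool (r = a) * (\<Sum>s<n. M r s * v s))"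
    unfolding bilinear_form_def by (simp add: mult.assoc sum_distrib_left)
  then show ?thesis
    using assms by (simp add: Int_def Collect_conv_if)
qed

lemma bilinear_form_unit_unit:
  assumes "a < n" "b < n"
  shows "bilinear_form n M (\<lambda>i. of_bool (i = a)) (\<lambda>i. of_bool (i = b)) = M a b"
  using assms by (simp add: bilinear_form_unit_left Int_def Collect_conv_if)

lemma psd_fun_diag_nonneg:
  assumes "psd_fun n M" "a < n"
  shows "0 \<le> M a a"
  using assms bilinear_form_unit_unit[of a n a M] unfolding psd_fun_def by metis

lemma psd_fun_row_eq_0_if_diag_eq_0:
  assumes psd: "psd_fun n M" and a: "a < n" "M a a = 0" and b: "b < n"
  shows "M a b = 0"
proof (rule ccontr)
  assume ne: "M a b \<noteq> 0"
  have sym: "\<forall>r<n. \<forall>s<n. M r s = M s r" using psd unfolding psd_fun_def by blast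
  define t where "t = - (M b b + 1) / (2 * M a b)"
  let ?w = "\<lambda>i. t * of_bool (i = a) + of_bool (i = b)"
  have "0 \<le> bilinear_form n M ?w ?w" using psd unfolding psd_fun_def by blast
  also have "\<dots> = 2 * t * M a b + M b b"
    using bilinear_form_add_smult[OF sym] bilinear_form_unit_unit a b by simp
  also have "\<dots> = -1" using ne unfolding t_def by (simp add: field_simps)
  finally show False by simp
qed

lemma psd_fun_schur_complement:
  assumes psd: "psd_fun n X" and i: "i < n" "0 < X i i"
  shows "psd_fun n (\<lambda>r s. X r s - X r i * X s i / X i i)"
  unfolding psd_fun_def
proof (intro conjI allI impI)
  have sym: "\<forall>r<n. \<forall>s<n. X r s = X s r" using psd unfolding psd_fun_def by blast
  show "X r s - X r i * X s i / X i i = X s r - X s i * X r i / X i i" if "r < n" "s < n" for r s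
    using sym that by (simp add: mult.commute)
  fix w
  define a where "a = X i i"
  define \<beta> where "\<beta> = (\<Sum>s<n. X s i * w s)"
  have "(\<Sum>r<n. \<Sum>s<n. w r * (X r i * X s i / a) * w s) = \<beta> * \<beta> / a"
    unfolding \<beta>_def sum_product sum_divide_distrib by (intro sum.cong refl) (simp add: field_simps)
  then have "bilinear_form n (\<lambda>r s. X r s - X r i * X s i / X i i) w w
      = bilinear_form n X w w - \<beta> * \<beta> / a"
    unfolding bilinear_form_def a_def by (simp add: algebra_simps sum_subtractf)
  also have "\<dots> = bilinear_form n X (\<lambda>r. - \<beta> / a * of_bool (r = i) + w r)
      (\<lambda>r. - \<beta> / a * of_bool (r = i) + w r)"
  proof -
    have "bilinear_form n X (\<lambda>r. of_bool (r = i)) w = \<beta>"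
      unfolding bilinear_form_unit_left[OF i(1)] \<beta>_def using sym i(1) by (intro sum.cong) auto
    then have "bilinear_form n X (\<lambda>r. - \<beta> / a * of_bool (r = i) + w r)
        (\<lambda>r. - \<beta> / a * of_bool (r = i) + w r)
        = (- \<beta> / a)\<^sup>2 * a + 2 * (- \<beta> / a) * \<beta> + bilinear_form n X w w"
      using bilinear_form_add_smult[OF sym, of "- \<beta> / a" "\<lambda>r. of_bool (r = i)" w]
        bilinear_form_unit_unit[OF i(1) i(1)] unfolding a_def by simp
    then show ?thesis
      using i(2) unfolding a_def by (simp add: power2_eq_square field_simps)
  qed
  also have "0 \<le> \<dots>" using psd unfolding psd_fun_def by blast
  finally show "0 \<le> bilinear_form n (\<lambda>r s. X r s - X r i * X s i / X i i) w w" .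
qed

lemma psd_fun_entrywise_product_nonneg:
  assumes "psd_fun n S" "psd_fun n X"
  shows "0 \<le> (\<Sum>r<n. \<Sum>s<n. S r s * X r s)"
  using assms(2)
proof (induction "card {i. i < n \<and> X i i \<noteq> 0}" arbitrary: X rule: less_induct)
  case (less X)
  show ?case
  proof (cases "\<exists>i<n. X i i \<noteq> 0")
    case False
    then have "\<forall>r<n. \<forall>s<n. X r s = 0" using psd_fun_row_eq_0_if_diag_eq_0[OF less.prems] by blast
    then show ?thesis by simp
  next
    case True
    then obtain i where i: "i < n" "X i i \<noteq> 0" by blast
    with psd_fun_diag_nonneg[OF less.prems] have a: "0 < X i i" by force
    \<comment> \<open>Split off the rank-one part u u^T / X i i, u the i-th column: the remainder is the
      Schur complement, PSD with strictly fewer nonzero diagonal entries.\<close>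
    define X' where "X' r s = X r s - X r i * X s i / X i i" for r s
    have psd': "psd_fun n X'"
      unfolding X'_def by (rule psd_fun_schur_complement[OF less.prems i(1) a])
    have "{j. j < n \<and> X' j j \<noteq> 0} \<subseteq> {j. j < n \<and> X j j \<noteq> 0} - {i}"
      using a psd_fun_row_eq_0_if_diag_eq_0[OF less.prems _ _ i(1)] unfolding X'_def by auto
    then have "card {j. j < n \<and> X' j j \<noteq> 0} < card {j. j < n \<and> X j j \<noteq> 0}"
      using i by (intro psubset_card_mono) auto
    then have IH: "0 \<le> (\<Sum>r<n. \<Sum>s<n. S r s * X' r s)"
      using less.hyps psd' by blast
    have "(\<Sum>r<n. \<Sum>s<n. S r s * X r s)
        = (\<Sum>r<n. \<Sum>s<n. S r s * X' r s) + bilinear_form n S (\<lambda>r. X r i) (\<lambda>r. X r i) / X i i"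
      unfolding X'_def bilinear_form_def
      by (simp add: algebra_simps sum.distrib sum_subtractf sum_divide_distrib)
    moreover have "0 \<le> bilinear_form n S (\<lambda>r. X r i) (\<lambda>r. X r i)"
      using assms(1) unfolding psd_fun_def by blast
    ultimately show ?thesis using IH a by simp
  qed
qed

lemma index_mult_mat_sum:
  assumes "A \<in> carrier_mat a b" "B \<in> carrier_mat b c" "i < a" "j < c"
  shows "(A * B) $$ (i, j) = (\<Sum>k<b. A $$ (i, k) * B $$ (k, j))"
  using assms by (simp add: scalar_prod_def atLeast0LessThan)

lemma index_mult_mat_vec_sum:
  assumes "A \<in> carrier_mat a b" "v \<in> carrier_vec b" "i < a"
  shows "(A *\<^sub>v v) $ i = (\<Sum>k<b. A $$ (i, k) * v $ k)"
  using assms by (simp add: scalar_prod_def atLeast0LessThan)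

lemma frob_eq_sum_entries:
  assumes "M \<in> carrier_mat r c" "N \<in> carrier_mat r c"
  shows "M \<bullet>\<^sub>F N = (\<Sum>i<r. \<Sum>j<c. M $$ (i, j) * N $$ (i, j))"
proof -
  have "M \<bullet>\<^sub>F N = (\<Sum>j<c. (transpose_mat M * N) $$ (j, j))"
    using assms unfolding frob_def mat_trace_def by simp
  also have "\<dots> = (\<Sum>j<c. \<Sum>i<r. M $$ (i, j) * N $$ (i, j))"
  proof (rule sum.cong[OF refl])
    fix j assume "j \<in> {..<c}"
    then show "(transpose_mat M * N) $$ (j, j) = (\<Sum>i<r. M $$ (i, j) * N $$ (i, j))"
      using assms by (subst index_mult_mat_sum[of _ c r _ c]) auto
  qed
  finally show ?thesis by (simp add: sum.swap[of _ "{..<c}"])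
qed

lemma sym_mat_entry: "sym_mat n M \<Longrightarrow> r < n \<Longrightarrow> s < n \<Longrightarrow> M $$ (r, s) = M $$ (s, r)"
  unfolding sym_mat_def by (metis carrier_matD index_transpose_mat(1))

lemma psd_fun_if_psd_mat:
  assumes "psd_mat n M"
  shows "psd_fun n (\<lambda>r s. M $$ (r, s))"
  unfolding psd_fun_def
proof (intro conjI allI impI)
  have M: "M \<in> carrier_mat n n"
    using assms unfolding psd_mat_def sym_mat_def by auto
  show "M $$ (r, s) = M $$ (s, r)" if "r < n" "s < n" for r s
    using assms that sym_mat_entry unfolding psd_mat_def by blast
  fix w
  have "bilinear_form n (\<lambda>r s. M $$ (r, s)) w w = vec n w \<bullet> (M *\<^sub>v vec n w)"
    using M unfolding bilinear_form_def
    by (simp add: scalar_prod_def index_mult_mat_vec_sum[OF M] sum_distrib_left mult_ac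
        atLeast0LessThan)
  also have "0 \<le> \<dots>" using assms unfolding psd_mat_def by auto
  finally show "0 \<le> bilinear_form n (\<lambda>r s. M $$ (r, s)) w w" .
qed

lemma frob_psd_nonneg:
  assumes "psd_mat n S" "psd_mat n X"
  shows "0 \<le> S \<bullet>\<^sub>F X"
proof -
  have "S \<in> carrier_mat n n" "X \<in> carrier_mat n n"
    using assms unfolding psd_mat_def sym_mat_def by auto
  then show ?thesis
    using psd_fun_entrywise_product_nonneg[OF psd_fun_if_psd_mat psd_fun_if_psd_mat, OF assms]
    by (simp add: frob_eq_sum_entries)
qed

lemma frob_zero_right: "M \<in> carrier_mat r c \<Longrightarrow> M \<bullet>\<^sub>F 0\<^sub>m r c = 0"
  by (simp add: frob_eq_sum_entries)

lemma frob_mult_transpose_eq_zero: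
  assumes S: "sym_mat n S" and Y: "Y \<in> carrier_mat n p" and SY: "S * Y = 0\<^sub>m n p"
  shows "S \<bullet>\<^sub>F (Y * transpose_mat Y) = 0"
proof -
  have "S \<in> carrier_mat n n" and "transpose_mat S = S"
    using S unfolding sym_mat_def by auto
  then have "transpose_mat S * (Y * transpose_mat Y) = (S * Y) * transpose_mat Y"
    using Y by (simp add: assoc_mult_mat[of S n n Y p "transpose_mat Y" n])
  also have "\<dots> = 0\<^sub>m n n"
    using Y unfolding SY by simp
  finally show ?thesis
    unfolding frob_def mat_trace_def by simp
qed

definition outer_prod :: "real vec \<Rightarrow> real vec \<Rightarrow> real mat" where
  "outer_prod v z = mat (dim_vec v) (dim_vec z) (\<lambda>(r, s). v $ r * z $ s)"

lemma outer_prod_carrier: "outer_prod v z \<in> carrier_mat (dim_vec v) (dim_vec z)"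
  unfolding outer_prod_def by simp

lemma row_outer_prod: "r < dim_vec v \<Longrightarrow> row (outer_prod v z) r = v $ r \<cdot>\<^sub>v z"
  unfolding outer_prod_def by (auto simp: row_def)

lemma outer_prod_mult_transpose_kernel:
  assumes Y: "Y \<in> carrier_mat n p" and z: "z \<in> carrier_vec p" and Yz: "Y *\<^sub>v z = 0\<^sub>v n"
  shows "outer_prod v z * transpose_mat Y = 0\<^sub>m (dim_vec v) n"
proof (rule eq_matI)
  fix r t assume "r < dim_row (0\<^sub>m (dim_vec v) n)" "t < dim_col (0\<^sub>m (dim_vec v) n)"
  then have r: "r < dim_vec v" and t: "t < n" by auto
  have "(outer_prod v z * transpose_mat Y) $$ (r, t) = v $ r * (row Y t \<bullet> z)"
    using Y z r t outer_prod_carrier[of v z]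
    by (simp add: row_outer_prod comm_scalar_prod[of _ p])
  also have "row Y t \<bullet> z = (Y *\<^sub>v z) $ t"
    using Y t by simp
  also have "v $ r * \<dots> = 0"
    using Yz t by simp
  finally show "(outer_prod v z * transpose_mat Y) $$ (r, t) = 0\<^sub>m (dim_vec v) n $$ (r, t)"
    using r t by simp
qed (use Y in \<open>simp_all add: outer_prod_def\<close>)

lemma frob_outer_prod_square:
  assumes S: "S \<in> carrier_mat n n" and v: "v \<in> carrier_vec n"
  shows "S \<bullet>\<^sub>F (outer_prod v z * transpose_mat (outer_prod v z)) = (z \<bullet> z) * (v \<bullet> (S *\<^sub>v v))"
proof -
  have U: "outer_prod v z \<in> carrier_mat n (dim_vec z)"
    using v outer_prod_carrier[of v z] by simp
  have "S \<bullet>\<^sub>F (outer_prod v z * transpose_mat (outer_prod v z))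
      = (\<Sum>r<n. \<Sum>s<n. S $$ (r, s) * ((z \<bullet> z) * (v $ r * v $ s)))"
    using S U v by (simp add: frob_eq_sum_entries[of _ n n] row_outer_prod mult_ac)
  also have "\<dots> = (z \<bullet> z) * (v \<bullet> (S *\<^sub>v v))"
    using S v by (simp add: scalar_prod_def index_mult_mat_vec_sum[OF S v] atLeast0LessThan
        sum_distrib_left mult_ac)
  finally show ?thesis .
qed

lemma rank_deficient_kernel_vec:
  fixes Y :: "'a :: field mat"
  assumes Y: "Y \<in> carrier_mat n p" and rk: "vec_space.rank n Y < p"
  obtains z where "z \<in> carrier_vec p" "z \<noteq> 0\<^sub>v p" "Y *\<^sub>v z = 0\<^sub>v n"
proof (cases "distinct (cols Y)")
  \<comment> \<open>The rank is taken of the column set, so repeated columns must be handled separately.\<close>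
  case True
  then have "\<not> module.lin_indpt class_ring (module_vec TYPE('a) n) (set (cols Y))"
    using vec_space.lin_indpt_full_rank[OF Y] rk by auto
  then show ?thesis
    using vec_space.lin_depE[OF Y _ True] that by blast
next
  case False
  then obtain i j where ij: "i < p" "j < p" "i \<noteq> j" "col Y i = col Y j"
    using Y by (auto simp: distinct_conv_nth)
  define z :: "'a vec" where "z = unit_vec p i - unit_vec p j"
  have z: "z \<in> carrier_vec p" "z $ i = 1"
    unfolding z_def using ij by auto
  then have "z \<noteq> 0\<^sub>v p"
    using ij(1) by auto
  moreover have "Y *\<^sub>v z = 0\<^sub>v n"
  proof (rule eq_vecI)
    fix r assume "r < dim_vec (0\<^sub>v n)"
    then have r: "r < n" by simp
    have "Y $$ (r, i) = Y $$ (r, j)"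
      using ij Y r by (metis carrier_matD index_col)
    then show "(Y *\<^sub>v z) $ r = 0\<^sub>v n $ r"
      using r Y ij unfolding z_def by (simp add: scalar_prod_minus_distrib[of _ p])
  qed (use Y in simp)
  ultimately show ?thesis
    using that z(1) by blast
qed

lemma psd_mat_if_second_order_rank_deficient:
  assumes S: "sym_mat n S" and Y: "Y \<in> carrier_mat n p" and rk: "vec_space.rank n Y < p"
    and A: "\<forall>i<m. A i \<in> carrier_mat n n"
    and second_order: "\<forall>U \<in> carrier_mat n p. (\<forall>i<m. A i \<bullet>\<^sub>F (U * transpose_mat Y) = 0) \<longrightarrow>
        0 \<le> S \<bullet>\<^sub>F (U * transpose_mat U)"
  shows "psd_mat n S"
  unfolding psd_mat_def
proof (intro conjI S ballI)
  fix v :: "real vec" assume v: "v \<in> carrier_vec n"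
  obtain z where z: "z \<in> carrier_vec p" "z \<noteq> 0\<^sub>v p" "Y *\<^sub>v z = 0\<^sub>v n"
    using rank_deficient_kernel_vec[OF Y rk] by blast
  have U: "outer_prod v z \<in> carrier_mat n p"
    using v z outer_prod_carrier[of v z] by simp
  have "outer_prod v z * transpose_mat Y = 0\<^sub>m n n"
    using outer_prod_mult_transpose_kernel[OF Y z(1,3)] v by simp
  then have "0 \<le> S \<bullet>\<^sub>F (outer_prod v z * transpose_mat (outer_prod v z))"
    using second_order U A frob_zero_right by simp
  moreover have "S \<in> carrier_mat n n"
    using S unfolding sym_mat_def by blast
  moreover have "0 < z \<bullet> z"
    using conjugate_square_greater_0_vec[OF z(1)] z(2) by simp
  ultimately show "0 \<le> v \<bullet> (S *\<^sub>v v)"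
    using v by (simp add: frob_outer_prod_square zero_le_mult_iff)
qed

lemma slackS_carrier: "slackS n m A Cm lam j \<in> carrier_mat (n j) (n j)"
  unfolding slackS_def by simp

lemma index_slackS:
  "r < n j \<Longrightarrow> s < n j \<Longrightarrow>
    slackS n m A Cm lam j $$ (r, s) = Cm j $$ (r, s) - (\<Sum>i<m. lam $ i * A i j $$ (r, s))"
  unfolding slackS_def by simp

lemma sym_slackS:
  assumes "sym_mat (n j) (Cm j)" "\<forall>i<m. sym_mat (n j) (A i j)"
  shows "sym_mat (n j) (slackS n m A Cm lam j)"
  unfolding sym_mat_def
  using assms by (auto intro!: eq_matI simp: slackS_def sym_mat_entry[of "n j"])

lemma frob_slackS:
  assumes C: "Cm j \<in> carrier_mat (n j) (n j)" and A: "\<forall>i<m. A i j \<in> carrier_mat (n j) (n j)"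
    and X: "X \<in> carrier_mat (n j) (n j)"
  shows "Cm j \<bullet>\<^sub>F X = slackS n m A Cm lam j \<bullet>\<^sub>F X + (\<Sum>i<m. lam $ i * (A i j \<bullet>\<^sub>F X))"
proof -
  have "(\<Sum>i<m. lam $ i * (A i j \<bullet>\<^sub>F X))
      = (\<Sum>i<m. \<Sum>r<n j. \<Sum>s<n j. lam $ i * A i j $$ (r, s) * X $$ (r, s))"
    by (intro sum.cong refl)
      (simp add: frob_eq_sum_entries[OF A[rule_format] X] sum_distrib_left mult.assoc)
  also have "\<dots> = (\<Sum>r<n j. \<Sum>s<n j. (\<Sum>i<m. lam $ i * A i j $$ (r, s)) * X $$ (r, s))"
    by (simp add: sum_distrib_right sum.swap[of _ "{..<m}"])
  finally show ?thesis
    by (simp add: frob_eq_sum_entries[OF slackS_carrier[of n m A Cm lam j] X]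
        frob_eq_sum_entries[OF C X] index_slackS left_diff_distrib sum_subtractf)
qed

lemma scalar_prod_slack_s_zero:
  assumes "slack_s d m a0 c lam = 0\<^sub>v d" and x: "x \<in> carrier_vec d"
  shows "c \<bullet> x = (\<Sum>i<m. lam $ i * (a0 i \<bullet> x))"
proof -
  have "c $ r = (\<Sum>i<m. lam $ i * a0 i $ r)" if "r < d" for r
    using that arg_cong[OF assms(1), of "\<lambda>v. v $ r"] by (simp add: slack_s_def)
  then show ?thesis
    using x by (simp add: scalar_prod_def sum_distrib_left sum_distrib_right mult.assoc
        sum.swap[of _ "{..<m}"] atLeast0LessThan)
qed

lemma objective_eq_dual_plus_slack:
  assumes data: "sdp_data l n d m A a0 Cm c b"
    and s0: "slack_s d m a0 c lam = 0\<^sub>v d" and feas: "feasible l n d m A a0 b X x"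
  shows "objective l Cm c X x = lam \<bullet> b + (\<Sum>j<l. slackS n m A Cm lam j \<bullet>\<^sub>F X j)"
proof -
  have C: "\<And>j. j < l \<Longrightarrow> Cm j \<in> carrier_mat (n j) (n j)"
    and A: "\<And>j. j < l \<Longrightarrow> \<forall>i<m. A i j \<in> carrier_mat (n j) (n j)"
    and b: "b \<in> carrier_vec m"
    using data unfolding sdp_data_def sym_mat_def by auto
  have X: "\<And>j. j < l \<Longrightarrow> X j \<in> carrier_mat (n j) (n j)" and x: "x \<in> carrier_vec d"
    and constraint: "\<And>i. i < m \<Longrightarrow> opA l A a0 X x i = b $ i"
    using feas unfolding feasible_def psd_mat_def sym_mat_def by auto
  have "(\<Sum>j<l. Cm j \<bullet>\<^sub>F X j)
      = (\<Sum>j<l. slackS n m A Cm lam j \<bullet>\<^sub>F X j + (\<Sum>i<m. lam $ i * (A i j \<bullet>\<^sub>F X j)))"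
    by (intro sum.cong refl) (simp add: frob_slackS C A X)
  then have "objective l Cm c X x
      = (\<Sum>j<l. slackS n m A Cm lam j \<bullet>\<^sub>F X j)
        + (\<Sum>j<l. \<Sum>i<m. lam $ i * (A i j \<bullet>\<^sub>F X j)) + (\<Sum>i<m. lam $ i * (a0 i \<bullet> x))"
    unfolding objective_def scalar_prod_slack_s_zero[OF s0 x] by (simp add: sum.distrib)
  also have "\<dots> = (\<Sum>j<l. slackS n m A Cm lam j \<bullet>\<^sub>F X j) + (\<Sum>i<m. lam $ i * opA l A a0 X x i)"
    by (simp add: opA_def sum.swap[of _ "{..<l}"] sum_distrib_left distrib_left sum.distrib)
  also have "(\<Sum>i<m. lam $ i * opA l A a0 X x i) = lam \<bullet> b"
    using b by (simp add: constraint scalar_prod_def atLeast0LessThan)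
  finally show ?thesis by simp
qed

lemma weak_duality:
  assumes data: "sdp_data l n d m A a0 Cm c b" and s0: "slack_s d m a0 c lam = 0\<^sub>v d"
    and psd: "\<forall>j<l. psd_mat (n j) (slackS n m A Cm lam j)" and feas: "feasible l n d m A a0 b X x"
  shows "lam \<bullet> b \<le> objective l Cm c X x"
proof -
  have "0 \<le> (\<Sum>j<l. slackS n m A Cm lam j \<bullet>\<^sub>F X j)"
    using psd feas unfolding feasible_def by (auto intro!: sum_nonneg frob_psd_nonneg)
  then show ?thesis
    using objective_eq_dual_plus_slack[OF data s0 feas] by simp
qed

lemma global_min_if_crit1_psd_slack:
  assumes k: "k \<le> l" and data: "sdp_data l n d m A a0 Cm c b"
    and crit: "crit1 l n d m k p A a0 Cm c b Y Xb x lam"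
    and psd: "\<forall>j<k. psd_mat (n j) (slackS n m A Cm lam j)"
  shows "global_min_BM l n d m k p A a0 Cm c b Y Xb x"
proof -
  have feasBM: "feasibleBM l n d m k p A a0 b Y Xb x"
    and psd_rest: "\<forall>j\<in>{k..<l}. psd_mat (n j) (slackS n m A Cm lam j)"
    and slackness: "(\<Sum>j\<in>{k..<l}. slackS n m A Cm lam j \<bullet>\<^sub>F Xb j) = 0"
    and s0: "slack_s d m a0 c lam = 0\<^sub>v d"
    and SY: "\<forall>j<k. slackS n m A Cm lam j * Y j = 0\<^sub>m (n j) (p j)"
    using crit unfolding crit1_def by auto
  have Y: "\<forall>j<k. Y j \<in> carrier_mat (n j) (p j)" and feas: "feasible l n d m A a0 b (liftBM k Y Xb) x"
    using feasBM unfolding feasibleBM_def by auto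
  have psd_all: "\<forall>j<l. psd_mat (n j) (slackS n m A Cm lam j)"
    using psd psd_rest by (metis atLeastLessThan_iff not_le)
  have "slackS n m A Cm lam j \<bullet>\<^sub>F liftBM k Y Xb j = 0" if "j < k" for j
    using frob_mult_transpose_eq_zero[of "n j" _ "Y j" "p j"] psd Y SY that
    unfolding psd_mat_def liftBM_def by simp
  then have "(\<Sum>j<k. slackS n m A Cm lam j \<bullet>\<^sub>F liftBM k Y Xb j) = 0"
    by simp
  moreover have "{..<l} = {..<k} \<union> {k..<l}" "{..<k} \<inter> {k..<l} = {}"
    using k by auto
  ultimately have "(\<Sum>j<l. slackS n m A Cm lam j \<bullet>\<^sub>F liftBM k Y Xb j) = 0"
    using slackness by (simp add: sum.union_disjoint liftBM_def)
  then have "objective l Cm c (liftBM k Y Xb) x = lam \<bullet> b"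
    using objective_eq_dual_plus_slack[OF data s0 feas] by simp
  then show ?thesis
    using feasBM weak_duality[OF data s0 psd_all] unfolding global_min_BM_def feasibleBM_def by auto
qed

lemma psd_slack_if_crit2_rank_deficient:
  assumes k: "k \<le> l" and data: "sdp_data l n d m A a0 Cm c b"
    and crit: "crit2 l n d m k p A a0 Cm c b Y Xb x lam"
    and rk: "\<forall>j<k. vec_space.rank (n j) (Y j) < p j"
  shows "\<forall>j<k. psd_mat (n j) (slackS n m A Cm lam j)"
proof (intro allI impI)
  fix j assume j: "j < k"
  have "sym_mat (n j) (Cm j)" and A_sym: "\<forall>i<m. sym_mat (n j) (A i j)"
    using data j k unfolding sdp_data_def by auto
  then have S: "sym_mat (n j) (slackS n m A Cm lam j)"
    by (rule sym_slackS)
  have A: "\<forall>i<m. A i j \<in> carrier_mat (n j) (n j)"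
    using A_sym unfolding sym_mat_def by blast
  have Y: "Y j \<in> carrier_mat (n j) (p j)"
    using crit j unfolding crit2_def crit1_def feasibleBM_def by blast
  have "\<forall>U \<in> carrier_mat (n j) (p j). (\<forall>i<m. A i j \<bullet>\<^sub>F (U * transpose_mat (Y j)) = 0) \<longrightarrow>
      0 \<le> slackS n m A Cm lam j \<bullet>\<^sub>F (U * transpose_mat U)"
    using crit j unfolding crit2_def by blast
  then show "psd_mat (n j) (slackS n m A Cm lam j)"
    using psd_mat_if_second_order_rank_deficient[OF S Y _ A] rk j by blast
qed

theorem lemma13:
  fixes l d m k :: nat and n p :: "nat \<Rightarrow> nat"
    and A :: "nat \<Rightarrow> nat \<Rightarrow> real mat" and a0 :: "nat \<Rightarrow> real vec"
    and Cm :: "nat \<Rightarrow> real mat" and c b :: "real vec"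
    and Y Xb :: "nat \<Rightarrow> real mat" and x :: "real vec"
  assumes k: "1 \<le> k" "k \<le> l"
    and p_pos: "\<forall>j<k. 0 < p j"
    and data: "sdp_data l n d m A a0 Cm c b"
    and nonempty: "\<exists>X x'. feasible l n d m A a0 b X x'"
    and attained: "\<exists>X x'. feasible l n d m A a0 b X x' \<and>
        (\<forall>X' x''. feasible l n d m A a0 b X' x'' \<longrightarrow> objective l Cm c X x' \<le> objective l Cm c X' x'')"
    and crit: "(\<exists>lam. crit1 l n d m k p A a0 Cm c b Y Xb x lam \<and>
                     (\<forall>j<k. psd_mat (n j) (slackS n m A Cm lam j)))
             \<or> (\<exists>lam. crit2 l n d m k p A a0 Cm c b Y Xb x lam \<and>
                     (\<forall>j<k. vec_space.rank (n j) (Y j) < p j))"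
  shows "global_min_BM l n d m k p A a0 Cm c b Y Xb x"
proof -
  \<comment> \<open>The multiplier certifies optimality by itself.\<close>
  obtain lam where "crit1 l n d m k p A a0 Cm c b Y Xb x lam"
    and "\<forall>j<k. psd_mat (n j) (slackS n m A Cm lam j)"
    using crit psd_slack_if_crit2_rank_deficient[OF k(2) data] unfolding crit2_def by blast
  then show ?thesis
    by (rule global_min_if_crit1_psd_slack[OF k(2) data])
qed

end
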